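(* Fix a dyadic cube $R$. Suppose $(Q_1,k_1),\dots,(Q_c,k_c)$ are pairwise distinct pairs, where each $k_l$ is an integer, $Q_l\in\mathcal Q^3_{k_l}$, and $R\in\mathcal R_{k_l}(Q_l)$. Then $c\lesssim1$, with implied constant depending only on the dimension $d$ and on $\eta$.
   Context: Setting: $\mathcal D$ a dyadic grid in $\mathbb R^d$, $\mathcal Q\subset\mathcal D$, $\tau=\{\tau_P\}_{P\in\mathcal Q}$ nonnegative constants, $\sigma,w$ weights (positive locally integrable functions), $1<q<\infty$, $f\ge0$ bounded with compact support, and $0<\eta<1$ a fixed parameter. $\mathbb E_P(g)=|P|^{-1}\int_P g$; $\overline T(f\sigma)(x)=\big(\sum_{P\in\mathcal Q}|\tau_P\mathbb E_P(f\sigma)\mathbf 1_P(x)|^q\big)^{1/q}$; $U(\{g_Pw\}_{P\in\mathcal Q})(x)=\sum_{P\in\mathcal Q}\mathbb E_P(g_Pw)\tau_P\mathbf 1_P(x)$; $a_P=(\mathbb E_P(f\sigma)\tau_P)^{q-1}\mathbf 1_P\,(\overline T(f\sigma))^{-1/q'}$ with $1/q+1/q'=1$. $\Omega_k=\{\overline T(f\sigma)>2^k\}$; $Q^{(1)}$ is the dyadic parent of $Q$ and $Q^{(j+1)}=(Q^{(j)})^{(1)}$. For each $k$, $\mathcal Q_k$ is a collection of pairwise disjoint dyadic cubes with $\Omega_k=\bigcup_{Q\in\mathcal Q_k}Q$; $Q^{(1)}\subset\Omega_k$, $Q^{(2)}\cap\Omega_k^c\ne\emptyset$ for $Q\in\mathcal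 Q_k$; $\sum_{Q\in\mathcal Q_k}\mathbf 1_{Q^{(1)}}\lesssim\mathbf 1_{\Omega_k}$; $\sup_{Q\in\mathcal Q_k}\#\{Q'\in\mathcal Q_k:Q'\cap Q^{(1)}\ne\emptyset\}\lesssim1$; $Q\in\mathcal Q_k$, $Q'\in\mathcal Q_l$, $Q\subsetneq Q'$ implies $k>l$. For $Q\in\mathcal Q_k$: $E_k(Q)=Q\cap(\Omega_{k+2}\setminus\Omega_{k+3})$, $\alpha_k(Q)=\int_{Q^{(1)}\setminus\Omega_{k+3}}f\,U(\{a_P\mathbf 1_{E_k(Q)}w\}_{P\in\mathcal Q})\sigma$, $\beta_k(Q)=\int_{Q^{(1)}\cap\Omega_{k+3}}f\,U(\{a_P\mathbf 1_{E_k(Q)}w\}_{P\in\mathcal Q})\sigma$; $\mathcal Q_k^3$ is the set of $Q\in\mathcal Q_k$ with $w(E_k(Q))>\eta w(Q)$ and $\alpha_k(Q)\le\beta_k(Q)$; and $\mathcal R_k(Q)=\{R\in\mathcal Q_{k+3}:Q^{(1)}\cap R\ne\emptyset\}$. *)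

theory Defs
  imports "HOL-Analysis.Analysis"
begin

type_synonym 'n cube = "(real^'n) set"

definition hcube :: "real^('n::finite) \<Rightarrow> real \<Rightarrow> 'n cube" where
  "hcube a l = {x. \<forall>i. a$i \<le> x$i \<and> x$i < a$i + l}"

definition dyadic_grid :: "('n::finite) cube set \<Rightarrow> bool" where
  "dyadic_grid D \<longleftrightarrow> (\<exists>G :: int \<Rightarrow> 'n cube set.
      D = (\<Union>j. G j)
    \<and> (\<forall>j. \<forall>Q\<in>G j. \<exists>a. Q = hcube a (2 powr (- real_of_int j)))
    \<and> (\<forall>j x. \<exists>!Q. Q \<in> G j \<and> x \<in> Q)
    \<and> (\<forall>j. \<forall>Q\<in>G (j+1). \<exists>P\<in>G j. Q \<subseteq> P))"

definition parent :: "('n::finite) cube set \<Rightarrow> 'n cube \<Rightarrow> 'n cube" where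
  "parent D Q = (THE P. P \<in> D \<and> Q \<subset> P \<and> (\<forall>P'\<in>D. Q \<subset> P' \<longrightarrow> P \<subseteq> P'))"

text \<open>Average E_P(g) = |P|^{-1} \<integral>_P g of a nonnegative function (finite in all uses).\<close>
definition avg :: "('n::finite) cube \<Rightarrow> (real^'n \<Rightarrow> real) \<Rightarrow> real" where
  "avg P g = enn2real (\<integral>\<^sup>+ x. ennreal (g x) * indicator P x \<partial>lebesgue) / measure lebesgue P"

definition wmeas :: "(real^('n::finite) \<Rightarrow> real) \<Rightarrow> (real^'n) set \<Rightarrow> ennreal" where
  "wmeas w E = (\<integral>\<^sup>+ x. ennreal (w x) * indicator E x \<partial>lebesgue)"

definition Tbar :: "('n::finite) cube set \<Rightarrow> ('n cube \<Rightarrow> real) \<Rightarrow> real \<Rightarrow> (real^'n \<Rightarrow> real)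
    \<Rightarrow> (real^'n \<Rightarrow> real) \<Rightarrow> real^'n \<Rightarrow> ennreal" where
  "Tbar Qs \<tau> q f \<sigma> x =
     (let S = (\<Sum>\<^sub>\<infinity>P\<in>Qs. ennreal (\<bar>\<tau> P * avg P (\<lambda>y. f y * \<sigma> y) * indicator P x\<bar> powr q))
      in if S = \<infinity> then \<infinity> else ennreal (enn2real S powr (1 / q)))"

definition aP :: "('n::finite) cube set \<Rightarrow> ('n cube \<Rightarrow> real) \<Rightarrow> real \<Rightarrow> (real^'n \<Rightarrow> real)
    \<Rightarrow> (real^'n \<Rightarrow> real) \<Rightarrow> 'n cube \<Rightarrow> real^'n \<Rightarrow> real" where
  "aP Qs \<tau> q f \<sigma> P x =
     (let T = Tbar Qs \<tau> q f \<sigma> x; q' = q / (q - 1) in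
      if T = 0 \<or> T = \<infinity> then 0
      else (avg P (\<lambda>y. f y * \<sigma> y) * \<tau> P) powr (q - 1) * indicator P x
           * enn2real T powr (- 1 / q'))"

definition Uop :: "('n::finite) cube set \<Rightarrow> ('n cube \<Rightarrow> real) \<Rightarrow> ('n cube \<Rightarrow> real^'n \<Rightarrow> real)
    \<Rightarrow> (real^'n \<Rightarrow> real) \<Rightarrow> real^'n \<Rightarrow> ennreal" where
  "Uop Qs \<tau> g w x = (\<Sum>\<^sub>\<infinity>P\<in>Qs. ennreal (avg P (\<lambda>y. g P y * w y) * \<tau> P * indicator P x))"

definition Omega :: "('n::finite) cube set \<Rightarrow> ('n cube \<Rightarrow> real) \<Rightarrow> real \<Rightarrow> (real^'n \<Rightarrow> real)
    \<Rightarrow> (real^'n \<Rightarrow> real) \<Rightarrow> int \<Rightarrow> (real^'n) set" where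
  "Omega Qs \<tau> q f \<sigma> k = {x. Tbar Qs \<tau> q f \<sigma> x > ennreal (2 powr real_of_int k)}"

definition Ek :: "('n::finite) cube set \<Rightarrow> ('n cube \<Rightarrow> real) \<Rightarrow> real \<Rightarrow> (real^'n \<Rightarrow> real)
    \<Rightarrow> (real^'n \<Rightarrow> real) \<Rightarrow> int \<Rightarrow> 'n cube \<Rightarrow> (real^'n) set" where
  "Ek Qs \<tau> q f \<sigma> k Q = Q \<inter> (Omega Qs \<tau> q f \<sigma> (k+2) - Omega Qs \<tau> q f \<sigma> (k+3))"

definition UE :: "('n::finite) cube set \<Rightarrow> ('n cube \<Rightarrow> real) \<Rightarrow> real \<Rightarrow> (real^'n \<Rightarrow> real)
    \<Rightarrow> (real^'n \<Rightarrow> real) \<Rightarrow> (real^'n \<Rightarrow> real) \<Rightarrow> int \<Rightarrow> 'n cube \<Rightarrow> real^'n \<Rightarrow> ennreal" where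
  "UE Qs \<tau> q f \<sigma> w k Q =
     Uop Qs \<tau> (\<lambda>P y. aP Qs \<tau> q f \<sigma> P y * indicator (Ek Qs \<tau> q f \<sigma> k Q) y) w"

definition alpha :: "('n::finite) cube set \<Rightarrow> 'n cube set \<Rightarrow> ('n cube \<Rightarrow> real) \<Rightarrow> real \<Rightarrow> (real^'n \<Rightarrow> real)
    \<Rightarrow> (real^'n \<Rightarrow> real) \<Rightarrow> (real^'n \<Rightarrow> real) \<Rightarrow> int \<Rightarrow> 'n cube \<Rightarrow> ennreal" where
  "alpha D Qs \<tau> q f \<sigma> w k Q =
     (\<integral>\<^sup>+ x. ennreal (f x) * UE Qs \<tau> q f \<sigma> w k Q x * ennreal (\<sigma> x)
        * indicator (parent D Q - Omega Qs \<tau> q f \<sigma> (k+3)) x \<partial>lebesgue)"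

definition beta :: "('n::finite) cube set \<Rightarrow> 'n cube set \<Rightarrow> ('n cube \<Rightarrow> real) \<Rightarrow> real \<Rightarrow> (real^'n \<Rightarrow> real)
    \<Rightarrow> (real^'n \<Rightarrow> real) \<Rightarrow> (real^'n \<Rightarrow> real) \<Rightarrow> int \<Rightarrow> 'n cube \<Rightarrow> ennreal" where
  "beta D Qs \<tau> q f \<sigma> w k Q =
     (\<integral>\<^sup>+ x. ennreal (f x) * UE Qs \<tau> q f \<sigma> w k Q x * ennreal (\<sigma> x)
        * indicator (parent D Q \<inter> Omega Qs \<tau> q f \<sigma> (k+3)) x \<partial>lebesgue)"

text \<open>\<Q>^3_k, relative to the chosen Whitney families Qf k = \<Q>_k.\<close>
definition Q3 :: "('n::finite) cube set \<Rightarrow> 'n cube set \<Rightarrow> ('n cube \<Rightarrow> real) \<Rightarrow> real \<Rightarrow> (real^'n \<Rightarrow> real)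
    \<Rightarrow> (real^'n \<Rightarrow> real) \<Rightarrow> (real^'n \<Rightarrow> real) \<Rightarrow> real \<Rightarrow> (int \<Rightarrow> 'n cube set) \<Rightarrow> int \<Rightarrow> 'n cube set" where
  "Q3 D Qs \<tau> q f \<sigma> w \<eta> Qf k = {Q \<in> Qf k.
      wmeas w (Ek Qs \<tau> q f \<sigma> k Q) > ennreal \<eta> * wmeas w Q
    \<and> alpha D Qs \<tau> q f \<sigma> w k Q \<le> beta D Qs \<tau> q f \<sigma> w k Q}"

definition Rk :: "('n::finite) cube set \<Rightarrow> (int \<Rightarrow> 'n cube set) \<Rightarrow> int \<Rightarrow> 'n cube \<Rightarrow> 'n cube set" where
  "Rk D Qf k Q = {R \<in> Qf (k+3). parent D Q \<inter> R \<noteq> {}}"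

definition whitney_families :: "('n::finite) cube set \<Rightarrow> (int \<Rightarrow> (real^'n) set) \<Rightarrow> real \<Rightarrow> real
    \<Rightarrow> (int \<Rightarrow> 'n cube set) \<Rightarrow> bool" where
  "whitney_families D \<Omega> C1 C2 Qf \<longleftrightarrow>
     (\<forall>k. Qf k \<subseteq> D
        \<and> (\<forall>Q\<in>Qf k. \<forall>Q'\<in>Qf k. Q \<noteq> Q' \<longrightarrow> Q \<inter> Q' = {})
        \<and> \<Union>(Qf k) = \<Omega> k
        \<and> (\<forall>Q\<in>Qf k. parent D Q \<subseteq> \<Omega> k \<and> parent D (parent D Q) \<inter> - \<Omega> k \<noteq> {})
        \<and> (\<forall>x. finite {Q\<in>Qf k. x \<in> parent D Q}
               \<and> real (card {Q\<in>Qf k. x \<in> parent D Q}) \<le> C1 * indicator (\<Omega> k) x)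
        \<and> (\<forall>Q\<in>Qf k. finite {Q'\<in>Qf k. Q' \<inter> parent D Q \<noteq> {}}
               \<and> real (card {Q'\<in>Qf k. Q' \<inter> parent D Q \<noteq> {}}) \<le> C2))
   \<and> (\<forall>k l Q Q'. Q \<in> Qf k \<longrightarrow> Q' \<in> Qf l \<longrightarrow> Q \<subset> Q' \<longrightarrow> k > l)"

end

theory Submission
  imports Defs
begin

text \<open>
  Only one consequence of \<open>Q \<in> \<Q>\<^sup>3\<^sub>k\<close> matters: \<open>E\<^sub>k(Q)\<close> has positive \<open>w\<close>-measure, so
  \<open>Q \<not>\<subseteq> \<Omega>\<^sub>k\<^sub>+\<^sub>3\<close>. Then \<open>Q\<^sup>(\<^sup>1\<^sup>)\<close>, which meets \<open>R \<in> \<Q>\<^sub>k\<^sub>+\<^sub>3\<close>, can neither lie inside \<open>R\<close>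
  (cubes of \<open>\<Q>\<^sub>k\<close> are never strictly inside cubes of \<open>\<Q>\<^sub>k\<^sub>+\<^sub>3\<close>) nor coincide with
  \<open>R\<^sup>(\<^sup>1\<^sup>) \<subseteq> \<Omega>\<^sub>k\<^sub>+\<^sub>3\<close>, so by dyadic nestedness \<open>R\<^sup>(\<^sup>2\<^sup>) \<subseteq> Q\<^sup>(\<^sup>1\<^sup>) \<subseteq> \<Omega>\<^sub>k\<close>. Since \<open>R\<^sup>(\<^sup>2\<^sup>)\<close> is not
  contained in \<open>\<Omega>\<^sub>k\<^sub>+\<^sub>3\<close>, any two admissible levels differ by at most two; and on one level
  all admissible cubes have the same parent (the parents meet in \<open>R\<^sup>(\<^sup>2\<^sup>)\<close>, and Whitney
  parents of one level are never strictly nested), so there are at most \<open>C\<^sub>2\<close> of them.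
\<close>

lemma hcube_corner: "0 < l \<Longrightarrow> a \<in> hcube a l"
  by (simp add: hcube_def)

lemma hcube_neq_if_side_less:
  assumes "0 < l" "l < m"
  shows "hcube (a::real^'n::finite) l \<noteq> hcube b m"
proof
  assume eq: "hcube a l = hcube b m"
  have "a \<in> hcube b m" "b \<in> hcube a l"
    using eq hcube_corner assms by (metis less_trans)+
  then have "a = b"
    by (auto simp: hcube_def vec_eq_iff intro: order_antisym)
  then have "a + (\<chi> i. l) \<in> hcube b m - hcube a l"
    using assms by (simp add: hcube_def)
  with eq show False by simp
qed

locale dyadic_generations =
  fixes D :: "('n::finite) cube set" and G :: "int \<Rightarrow> 'n cube set"
  assumes D_eq: "D = (\<Union>j. G j)"
    and generation_cube: "\<And>j Q. Q \<in> G j \<Longrightarrow> \<exists>a. Q = hcube a (2 powr (- real_of_int j))"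
    and generation_partition: "\<And>j x. \<exists>!Q. Q \<in> G j \<and> x \<in> Q"
    and generation_refines: "\<And>j Q. Q \<in> G (j+1) \<Longrightarrow> \<exists>P\<in>G j. Q \<subseteq> P"
begin

lemma generation_nonempty: "Q \<in> G j \<Longrightarrow> Q \<noteq> {}"
  using generation_cube hcube_corner[of "2 powr (- real_of_int j)"] by fastforce

lemma generation_unique: "P \<in> G j \<Longrightarrow> Q \<in> G j \<Longrightarrow> x \<in> P \<Longrightarrow> x \<in> Q \<Longrightarrow> P = Q"
  using generation_partition[of j x] by blast

lemma generation_ancestor:
  assumes "Q \<in> G i" "j \<le> i"
  shows "\<exists>P\<in>G j. Q \<subseteq> P"
proof -
  have "\<exists>P\<in>G j. S \<subseteq> P" if "S \<in> G (j + int m)" for m :: nat and S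
    using that
  proof (induction m arbitrary: S)
    case 0
    then show ?case by auto
  next
    case (Suc m)
    have "S \<in> G (j + int m + 1)" using Suc.prems by (simp add: algebra_simps)
    then obtain P where P: "P \<in> G (j + int m)" "S \<subseteq> P"
      using generation_refines by blast
    obtain P' where "P' \<in> G j" "P \<subseteq> P'" using Suc.IH[OF P(1)] by blast
    with P(2) show ?case by blast
  qed
  moreover have "Q \<in> G (j + int (nat (i - j)))" using assms by simp
  ultimately show ?thesis by blast
qed

lemma generation_nested:
  assumes "Q \<in> G i" "P \<in> G j" "j \<le> i" "P \<inter> Q \<noteq> {}"
  shows "Q \<subseteq> P"
proof -
  obtain P' where P': "P' \<in> G j" "Q \<subseteq> P'"
    using generation_ancestor assms(1,3) by blast
  obtain x where "x \<in> P" "x \<in> Q" using assms(4) by blast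
  then have "P' = P" using generation_unique[OF P'(1) assms(2)] P'(2) by blast
  with P' show ?thesis by simp
qed

lemma nested:
  assumes "P \<in> D" "Q \<in> D" "P \<inter> Q \<noteq> {}"
  shows "P \<subseteq> Q \<or> Q \<subseteq> P"
proof -
  obtain i j where Q: "Q \<in> G i" and P: "P \<in> G j" using assms(1,2) D_eq by blast
  show ?thesis
  proof (cases "j \<le> i")
    case True
    then show ?thesis using generation_nested[OF Q P True assms(3)] by simp
  next
    case False
    have QP: "Q \<inter> P \<noteq> {}" using assms(3) by blast
    show ?thesis using generation_nested[OF P Q _ QP] False by simp
  qed
qed

lemma parent_of_generation:
  assumes Q: "Q \<in> G i" and P: "P \<in> G (i - 1)" "Q \<subseteq> P"
  shows "parent D Q = P" and "P \<in> D" and "Q \<subset> P"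
    and "\<And>P'. P' \<in> D \<Longrightarrow> Q \<subset> P' \<Longrightarrow> P \<subseteq> P'"
proof -
  obtain a b where "Q = hcube a (2 powr (- real_of_int i))" "P = hcube b (2 powr (- real_of_int (i - 1)))"
    using generation_cube Q P by metis
  moreover have "hcube a (2 powr (- real_of_int i)) \<noteq> hcube b (2 powr (- real_of_int (i - 1)))"
    by (rule hcube_neq_if_side_less) simp_all
  ultimately have "Q \<noteq> P" by simp
  with P show strict: "Q \<subset> P" by blast
  show PD: "P \<in> D" using P D_eq by blast
  show least: "P \<subseteq> P'" if P'D: "P' \<in> D" and QP': "Q \<subset> P'" for P'
  proof -
    obtain j where P': "P' \<in> G j" using P'D D_eq by blast
    have "P' \<inter> Q \<noteq> {}" using QP' generation_nonempty[OF Q] by blast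
    show ?thesis
    proof (cases "j \<le> i - 1")
      case True
      have "P' \<inter> P \<noteq> {}" using \<open>P' \<inter> Q \<noteq> {}\<close> P(2) by blast
      then show ?thesis using generation_nested[OF P(1) P' True] by simp
    next
      case False
      then have "P' \<subseteq> Q"
        using generation_nested[OF P' Q] \<open>P' \<inter> Q \<noteq> {}\<close> by (simp add: inf_commute)
      with QP' show ?thesis by blast
    qed
  qed
  show "parent D Q = P"
    unfolding parent_def
  proof (rule the_equality)
    show "P \<in> D \<and> Q \<subset> P \<and> (\<forall>P'\<in>D. Q \<subset> P' \<longrightarrow> P \<subseteq> P')"
      using PD strict least by blast
  next
    fix P1 assume "P1 \<in> D \<and> Q \<subset> P1 \<and> (\<forall>P'\<in>D. Q \<subset> P' \<longrightarrow> P1 \<subseteq> P')"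
    then show "P1 = P" using least PD strict by (meson subset_antisym)
  qed
qed

lemma parent: "Q \<in> D \<Longrightarrow> parent D Q \<in> D \<and> Q \<subset> parent D Q \<and> (\<forall>P\<in>D. Q \<subset> P \<longrightarrow> parent D Q \<subseteq> P)"
proof -
  assume "Q \<in> D"
  then obtain i where Q: "Q \<in> G i" using D_eq by blast
  then obtain P where "P \<in> G (i - 1)" "Q \<subseteq> P"
    using generation_ancestor[OF Q, of "i - 1"] by auto
  from parent_of_generation[OF Q this] show ?thesis by blast
qed

end

lemma dyadic_grid_generations: "dyadic_grid D \<Longrightarrow> \<exists>G. dyadic_generations D G"
  unfolding dyadic_grid_def dyadic_generations_def by (simp add: Ball_def)

lemma dyadic_grid_nonempty: "dyadic_grid D \<Longrightarrow> Q \<in> D \<Longrightarrow> Q \<noteq> {}"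
  using dyadic_grid_generations dyadic_generations.D_eq dyadic_generations.generation_nonempty
  by blast

lemma dyadic_grid_nested:
  "dyadic_grid D \<Longrightarrow> P \<in> D \<Longrightarrow> Q \<in> D \<Longrightarrow> P \<inter> Q \<noteq> {} \<Longrightarrow> P \<subseteq> Q \<or> Q \<subseteq> P"
  using dyadic_grid_generations dyadic_generations.nested by blast

lemma dyadic_grid_parent:
  assumes "dyadic_grid D" "Q \<in> D"
  shows parent_in_grid: "parent D Q \<in> D"
    and subset_parent: "Q \<subset> parent D Q"
    and parent_least: "\<And>P. P \<in> D \<Longrightarrow> Q \<subset> P \<Longrightarrow> parent D Q \<subseteq> P"
  using dyadic_grid_generations[OF assms(1)] dyadic_generations.parent[OF _ assms(2)] by blast+

locale whitney_decomposition =
  fixes D :: "('n::finite) cube set" and \<Omega> :: "int \<Rightarrow> (real^'n) set"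
    and C1 C2 :: real and Qf :: "int \<Rightarrow> 'n cube set"
  assumes grid: "dyadic_grid D"
    and whitney: "whitney_families D \<Omega> C1 C2 Qf"
    and Omega_antimono: "k \<le> k' \<Longrightarrow> \<Omega> k' \<subseteq> \<Omega> k"
begin

lemmas whitney_level = whitney[unfolded whitney_families_def, THEN conjunct1, THEN spec]

lemma whitney_in_grid: "Q \<in> Qf k \<Longrightarrow> Q \<in> D"
  using whitney_level[of k, THEN conjunct1] by blast

lemma whitney_parent:
  assumes "Q \<in> Qf k"
  shows parent_subset_Omega: "parent D Q \<subseteq> \<Omega> k"
    and grandparent_not_subset_Omega: "\<not> parent D (parent D Q) \<subseteq> \<Omega> k"
proof -
  have "parent D Q \<subseteq> \<Omega> k \<and> parent D (parent D Q) \<inter> - \<Omega> k \<noteq> {}"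
    using whitney_level[of k, THEN conjunct2, THEN conjunct2, THEN conjunct2, THEN conjunct1] assms
    by (rule bspec)
  then show "parent D Q \<subseteq> \<Omega> k" "\<not> parent D (parent D Q) \<subseteq> \<Omega> k" by blast+
qed

lemma card_meeting_parent:
  "Q \<in> Qf k \<Longrightarrow> finite {Q'\<in>Qf k. Q' \<inter> parent D Q \<noteq> {}}
     \<and> real (card {Q'\<in>Qf k. Q' \<inter> parent D Q \<noteq> {}}) \<le> C2"
  using whitney_level[of k, THEN conjunct2, THEN conjunct2, THEN conjunct2, THEN conjunct2,
      THEN conjunct2]
  by (rule bspec)

lemma level_less_if_psubset: "Q \<in> Qf k \<Longrightarrow> Q' \<in> Qf l \<Longrightarrow> Q \<subset> Q' \<Longrightarrow> l < k"
  using whitney[unfolded whitney_families_def, THEN conjunct2] by blast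

lemma parent_eq_if_parents_meet:
  assumes Q: "Q \<in> Qf k" and Q': "Q' \<in> Qf k" and meet: "parent D Q \<inter> parent D Q' \<noteq> {}"
  shows "parent D Q = parent D Q'"
proof -
  have no_psubset: "\<not> parent D Q1 \<subset> parent D Q2" if Q1: "Q1 \<in> Qf k" and Q2: "Q2 \<in> Qf k" for Q1 Q2
  proof
    assume lt: "parent D Q1 \<subset> parent D Q2"
    have "parent D (parent D Q1) \<subseteq> parent D Q2"
      using parent_least[OF grid parent_in_grid[OF grid whitney_in_grid[OF Q1]]
          parent_in_grid[OF grid whitney_in_grid[OF Q2]] lt] .
    with parent_subset_Omega[OF Q2] grandparent_not_subset_Omega[OF Q1] show False
      by blast
  qed
  have "parent D Q \<subseteq> parent D Q' \<or> parent D Q' \<subseteq> parent D Q"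
    using dyadic_grid_nested[OF grid parent_in_grid[OF grid whitney_in_grid[OF Q]]
        parent_in_grid[OF grid whitney_in_grid[OF Q']] meet] .
  with no_psubset[OF Q Q'] no_psubset[OF Q' Q] show ?thesis by blast
qed

text \<open>\<open>Q \<in> \<Q>\<^sub>k\<close> with \<open>R \<in> \<R>\<^sub>k(Q)\<close>, weakening \<open>E\<^sub>k(Q) \<noteq> \<emptyset>\<close> to \<open>Q \<not>\<subseteq> \<Omega>\<^sub>k\<^sub>+\<^sub>3\<close>.\<close>
definition linked :: "'n cube \<Rightarrow> 'n cube \<Rightarrow> int \<Rightarrow> bool" where
  "linked R Q k \<longleftrightarrow> Q \<in> Qf k \<and> R \<in> Qf (k + 3) \<and> parent D Q \<inter> R \<noteq> {} \<and> \<not> Q \<subseteq> \<Omega> (k + 3)"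

lemma grandparent_subset_parent_if_linked:
  assumes "linked R Q k"
  shows "parent D (parent D R) \<subseteq> parent D Q"
proof -
  from assms have Q: "Q \<in> Qf k" and R: "R \<in> Qf (k + 3)"
    and meet: "parent D Q \<inter> R \<noteq> {}" and outside: "\<not> Q \<subseteq> \<Omega> (k + 3)"
    unfolding linked_def by auto
  define P where "P = parent D Q"
  have QD: "Q \<in> D" and RD: "R \<in> D" using Q R whitney_in_grid by auto
  have PD: "P \<in> D" and QP: "Q \<subset> P"
    unfolding P_def using grid QD by (rule parent_in_grid, rule subset_parent)
  have "\<not> P \<subseteq> R"
  proof
    assume "P \<subseteq> R"
    with QP have "Q \<subset> R" by blast
    with level_less_if_psubset[OF Q R] show False by simp
  qed
  with dyadic_grid_nested[OF grid PD RD] meet have RP: "R \<subset> P"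
    unfolding P_def by blast
  have R1D: "parent D R \<in> D" using grid RD by (rule parent_in_grid)
  have "parent D R \<subseteq> P" using parent_least[OF grid RD PD RP] .
  moreover have "parent D R \<noteq> P"
    using parent_subset_Omega[OF R] outside QP by blast
  ultimately show ?thesis
    using parent_least[OF grid R1D PD] unfolding P_def by blast
qed

lemma linked_levels_close:
  assumes "linked R Q k" "linked R Q' k'"
  shows "k' < k + 3"
proof (rule ccontr)
  assume "\<not> k' < k + 3"
  then have "\<Omega> k' \<subseteq> \<Omega> (k + 3)" by (intro Omega_antimono) simp
  moreover have "parent D (parent D R) \<subseteq> \<Omega> k'"
    using grandparent_subset_parent_if_linked[OF assms(2)] parent_subset_Omega assms(2)
    unfolding linked_def by blast
  moreover have "\<not> parent D (parent D R) \<subseteq> \<Omega> (k + 3)"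
    using grandparent_not_subset_Omega assms(1) unfolding linked_def by blast
  ultimately show False by blast
qed

lemma linked_same_level_meets_parent:
  assumes "linked R Q k" "linked R Q' k"
  shows "Q' \<in> {Q''\<in>Qf k. Q'' \<inter> parent D Q \<noteq> {}}"
proof -
  have Q: "Q \<in> Qf k" and Q': "Q' \<in> Qf k" and RD: "R \<in> D"
    using assms whitney_in_grid unfolding linked_def by auto
  have "parent D (parent D R) \<noteq> {}"
    using dyadic_grid_nonempty[OF grid parent_in_grid[OF grid parent_in_grid[OF grid RD]]] .
  then have "parent D Q \<inter> parent D Q' \<noteq> {}"
    using grandparent_subset_parent_if_linked[OF assms(1)]
      grandparent_subset_parent_if_linked[OF assms(2)] by blast
  then have "parent D Q' = parent D Q"
    using parent_eq_if_parents_meet[OF Q' Q] by blast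
  moreover have "Q' \<noteq> {}" "Q' \<subseteq> parent D Q'"
    using dyadic_grid_nonempty[OF grid] subset_parent[OF grid] whitney_in_grid[OF Q'] by auto
  ultimately show ?thesis using Q' by blast
qed

lemma card_linked_level:
  "finite {Q. linked R Q k} \<and> real (card {Q. linked R Q k}) \<le> \<bar>C2\<bar>"
proof (cases "\<exists>Q. linked R Q k")
  case True
  then obtain Q where Q: "linked R Q k" by blast
  then have Qk: "Q \<in> Qf k" unfolding linked_def by blast
  let ?B = "{Q'\<in>Qf k. Q' \<inter> parent D Q \<noteq> {}}"
  have sub: "{Q'. linked R Q' k} \<subseteq> ?B"
    using linked_same_level_meets_parent[OF Q] by blast
  have "finite ?B" "real (card ?B) \<le> C2" using card_meeting_parent[OF Qk] by auto
  with card_mono[OF _ sub] finite_subset[OF sub] show ?thesis by force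
qed simp

lemma card_linked:
  "finite {(Q, k). linked R Q k} \<and> real (card {(Q, k). linked R Q k}) \<le> 5 * \<bar>C2\<bar>"
proof (cases "\<exists>Q k. linked R Q k")
  case True
  then obtain Q0 k0 where Q0: "linked R Q0 k0" by blast
  define I where "I = {k0 - 2 .. k0 + 2}"
  let ?S = "SIGMA k:I. {Q. linked R Q k}"
  have "{(Q, k). linked R Q k} = (\<lambda>(k, Q). (Q, k)) ` ?S"
  proof -
    have "k \<in> I" if "linked R Q k" for Q k
      using linked_levels_close[OF Q0 that] linked_levels_close[OF that Q0] unfolding I_def by simp
    then show ?thesis by (auto simp: image_iff)
  qed
  moreover have fin: "finite ?S"
    unfolding I_def using card_linked_level by (intro finite_SigmaI) auto
  moreover have "real (card ?S) \<le> 5 * \<bar>C2\<bar>"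
  proof -
    have "real (card ?S) = (\<Sum>k\<in>I. real (card {Q. linked R Q k}))"
      unfolding I_def using card_linked_level by simp
    also have "\<dots> \<le> (\<Sum>k\<in>I. \<bar>C2\<bar>)" using card_linked_level by (intro sum_mono) blast
    also have "\<dots> = 5 * \<bar>C2\<bar>" unfolding I_def by simp
    finally show ?thesis .
  qed
  ultimately show ?thesis
    using card_image_le[OF fin, of "\<lambda>(k, Q). (Q, k)"] by force
qed simp

end

lemma Omega_antimono: "k \<le> k' \<Longrightarrow> Omega Qs \<tau> q f \<sigma> k' \<subseteq> Omega Qs \<tau> q f \<sigma> k"
proof -
  assume "k \<le> k'"
  then have "ennreal (2 powr real_of_int k) \<le> ennreal (2 powr real_of_int k')"
    by (intro ennreal_leI) simp
  then show ?thesis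
    unfolding Omega_def using le_less_trans by blast
qed

lemma wmeas_empty: "wmeas w {} = 0"
  unfolding wmeas_def by simp

theorem theorem3p10:
  fixes \<eta> C1 C2 :: real
  assumes "0 < \<eta>" and "\<eta> < 1"
  shows "\<exists>C::real. \<forall>(D :: ('n::finite) cube set) (Qs :: 'n cube set) (\<tau> :: 'n cube \<Rightarrow> real)
            (\<sigma> :: real^'n \<Rightarrow> real) (w :: real^'n \<Rightarrow> real) (q :: real) (f :: real^'n \<Rightarrow> real)
            (Qf :: int \<Rightarrow> 'n cube set) (R :: 'n cube).
      dyadic_grid D \<and> Qs \<subseteq> D \<and> (\<forall>P\<in>Qs. 0 \<le> \<tau> P)
    \<and> (\<forall>x. 0 < \<sigma> x) \<and> \<sigma> \<in> borel_measurable lebesgue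
    \<and> (\<forall>K. compact K \<longrightarrow> set_integrable lebesgue K \<sigma>)
    \<and> (\<forall>x. 0 < w x) \<and> w \<in> borel_measurable lebesgue
    \<and> (\<forall>K. compact K \<longrightarrow> set_integrable lebesgue K w)
    \<and> 1 < q
    \<and> (\<forall>x. 0 \<le> f x) \<and> f \<in> borel_measurable lebesgue \<and> (\<exists>M. \<forall>x. f x \<le> M)
    \<and> (\<exists>K. compact K \<and> (\<forall>x. x \<notin> K \<longrightarrow> f x = 0))
    \<and> whitney_families D (Omega Qs \<tau> q f \<sigma>) C1 C2 Qf
    \<and> R \<in> D
    \<longrightarrow> finite {(Q, k). Q \<in> Q3 D Qs \<tau> q f \<sigma> w \<eta> Qf k \<and> R \<in> Rk D Qf k Q}
      \<and> real (card {(Q, k). Q \<in> Q3 D Qs \<tau> q f \<sigma> w \<eta> Qf k \<and> R \<in> Rk D Qf k Q}) \<le> C"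
proof (intro exI[of _ "5 * \<bar>C2\<bar>"] allI impI, elim conjE)
  fix D :: "'n cube set" and Qs \<tau> \<sigma> w q f Qf R
  assume grid: "dyadic_grid D" and whitney: "whitney_families D (Omega Qs \<tau> q f \<sigma>) C1 C2 Qf"
  interpret W: whitney_decomposition D "Omega Qs \<tau> q f \<sigma>" C1 C2 Qf
    using grid whitney Omega_antimono by unfold_locales
  let ?S = "{(Q, k). Q \<in> Q3 D Qs \<tau> q f \<sigma> w \<eta> Qf k \<and> R \<in> Rk D Qf k Q}"
  have "?S \<subseteq> {(Q, k). W.linked R Q k}"
  proof clarify
    fix Q k assume Q3: "Q \<in> Q3 D Qs \<tau> q f \<sigma> w \<eta> Qf k" and Rk: "R \<in> Rk D Qf k Q"
    then have "Ek Qs \<tau> q f \<sigma> k Q \<noteq> {}"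
      unfolding Q3_def by (auto simp: wmeas_empty)
    with Q3 Rk show "W.linked R Q k"
      unfolding W.linked_def Q3_def Rk_def Ek_def by blast
  qed
  with W.card_linked show "finite ?S \<and> real (card ?S) \<le> 5 * \<bar>C2\<bar>"
    by (meson card_mono finite_subset of_nat_le_iff order_trans)
qed

end
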